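(* Let $n\ge1$, let $a_1,\dots,a_n\ge2$ be integers, $d_0=1$, $d_i=a_1\cdots a_i$, and $\widetilde f_n(x_1,\dots,x_n)=x_1^{a_1}+x_1x_2^{a_2}+\cdots+x_{n-1}x_n^{a_n}$. For every $\mathbf{k}=(k_1,\dots,k_n)$ with $0\le k_i\le a_i-1$ ($i=1,\dots,n-1$) and $0\le k_n\le a_n-2$, $$\int_{(\mathbb{R}_{\ge0})^n}e^{-\widetilde f_n(\mathbf{x})}x_1^{k_1}\cdots x_n^{k_n}\,dx_1\cdots dx_n=\frac{1}{d_n}\prod_{l=1}^n\Gamma\!\left(1-\omega^{(n)}_{d_n-\psi(\mathbf{k}),l}\right),$$ where $\Gamma$ is the Gamma function.
   Context: $\psi(k_1,\dots,k_n):=\sum_{l=1}^n(-1)^{l-1}\frac{d_n}{d_l}(k_l+1)$, which for such $\mathbf{k}$ lies in $I'_n=\{\kappa\in\{1,\dots,d_n\}\mid a_n\nmid\kappa\}$. For $\kappa\in I'_n$ and $i=1,\dots,n$, $\omega^{(n)}_{\kappa,i}:=(-1)^{i-1}\frac{d_{i-1}}{d_n}\kappa-\lfloor(-1)^{i-1}\frac{d_{i-1}}{d_n}\kappa\rfloor$. *)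

theory Defs
  imports "HOL-Analysis.Analysis"
begin

text \<open>Exponents a_1,...,a_n are given as a function a :: nat => nat, indexed from 1.\<close>

definition dprod :: "(nat \<Rightarrow> nat) \<Rightarrow> nat \<Rightarrow> nat" where
  "dprod a i = (\<Prod>j\<in>{1..i}. a j)"

definition ftilde :: "(nat \<Rightarrow> nat) \<Rightarrow> nat \<Rightarrow> (nat \<Rightarrow> real) \<Rightarrow> real" where
  "ftilde a n x = x 1 ^ a 1 + (\<Sum>i\<in>{2..n}. x (i - 1) * x i ^ a i)"

definition psi :: "(nat \<Rightarrow> nat) \<Rightarrow> nat \<Rightarrow> (nat \<Rightarrow> nat) \<Rightarrow> int" where
  "psi a n k = (\<Sum>l\<in>{1..n}. (-1) ^ (l - 1) * int (dprod a n div dprod a l) * (int (k l) + 1))"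

definition omega :: "(nat \<Rightarrow> nat) \<Rightarrow> nat \<Rightarrow> int \<Rightarrow> nat \<Rightarrow> real" where
  "omega a n \<kappa> i =
     (let t = (-1) ^ (i - 1) * real (dprod a (i - 1)) / real (dprod a n) * real_of_int \<kappa>
      in t - real_of_int \<lfloor>t\<rfloor>)"

end

theory Submission
  imports Defs "HOL-Real_Asymp.Real_Asymp"
begin

(*
  Integrate out x_n, x_(n-1), ..., x_1 in turn. For c > 0 the substitution y = (t/c)^(1/a)
  turns the integral of y^(a z - 1) exp (- c y^a) over (0, oo) into Euler's integral, with
  value Gamma z / (a c^z). With c = x_(l-1) and a = a_l, each step yields one Gamma factor and
  lowers the exponent of x_(l-1) by z. If e_l / a_l is the l-th Gamma argument, then
  e_n = k_n + 1 and e_l = k_l + 1 - e_(l+1) / a_(l+1); the bounds on k keep every e_l in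
  (0, a_l), so all the integrals converge. Solving the recursion, e_l / a_l is an integer
  minus the number whose fractional part is omega_l, and since e_l / a_l lies in (0, 1)
  it equals 1 - omega_l.
*)

lemma Gamma_set_integral_Ioi:
  fixes z :: real
  assumes "z > 0"
  shows "set_integrable lborel {0<..} (\<lambda>t. t powr (z - 1) / exp t)"
    and "(LBINT t:{0<..}. t powr (z - 1) / exp t) = Gamma z"
proof -
  have "(\<integral>\<^sup>+t. ennreal (indicator {0<..} t * (t powr (z - 1) / exp t)) \<partial>lborel) = ennreal (Gamma z)"
    unfolding Gamma_conv_nn_integral_real[OF assms] by (auto intro!: nn_integral_cong simp: indicator_def)
  then have "integrable lborel (\<lambda>t. indicator {0<..} t * (t powr (z - 1) / exp t))
      \<and> (\<integral>t. indicator {0<..} t * (t powr (z - 1) / exp t) \<partial>lborel) = Gamma z"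
    using assms by (subst (asm) nn_integral_eq_integrable) (auto simp: Gamma_real_nonneg)
  then show "set_integrable lborel {0<..} (\<lambda>t. t powr (z - 1) / exp t)"
    and "(LBINT t:{0<..}. t powr (z - 1) / exp t) = Gamma z"
    by (simp_all add: set_integrable_def set_lebesgue_integral_def)
qed

lemma nn_integral_powr_exp_neg_powr:
  fixes a c z :: real
  assumes a: "a > 0" and c: "c > 0" and z: "z > 0"
  shows "(\<integral>\<^sup>+y. ennreal (indicator {0<..} y * y powr (a * z - 1) * exp (- c * y powr a)) \<partial>lborel)
         = ennreal (Gamma z / (a * c powr z))"
proof -
  define f where "f y = y powr (a * z - 1) * exp (- c * y powr a)" for y
  define g where "g t = (t / c) powr (1 / a)" for t
  define g' where "g' t = (t / c) powr (1 / a - 1) / (a * c)" for t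
  have fg: "f (g t) * g' t = t powr (z - 1) / exp t / (a * c powr z)" if "t > 0" for t
  proof -
    have "f (g t) * g' t = (t / c) powr ((a * z - 1) / a + (1 / a - 1)) * exp (- t) / (a * c)"
      using that a c by (simp add: f_def g_def g'_def powr_powr powr_add)
    also have "(t / c) powr ((a * z - 1) / a + (1 / a - 1)) = t powr (z - 1) * c / c powr z"
      using that a c by (simp add: powr_divide powr_diff diff_divide_distrib)
    finally show ?thesis
      using c by (simp add: exp_minus field_simps)
  qed
  have "set_integrable lborel {0<..} (\<lambda>t. f (g t) * g' t)"
    using set_integrable_divide[OF Gamma_set_integral_Ioi(1)[OF z], of "a * c powr z"]
    by (rule set_integrable_cong[THEN iffD1, rotated -1]) (auto simp: fg)
  then have fg_int: "set_integrable lborel (einterval 0 \<infinity>) (\<lambda>t. f (g t) * g' t)"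
    by (simp add: zero_ereal_def)
  have "(LBINT t=0..\<infinity>. f (g t) * g' t) = (LBINT t:{0<..}. t powr (z - 1) / exp t / (a * c powr z))"
    unfolding zero_ereal_def interval_integral_to_infinity_eq
    by (rule set_lebesgue_integral_cong) (auto simp: fg)
  also have "\<dots> = Gamma z / (a * c powr z)"
    by (simp only: set_integral_divide_zero Gamma_set_integral_Ioi(2)[OF z])
  finally have fg_val: "(LBINT t=0..\<infinity>. f (g t) * g' t) = Gamma z / (a * c powr z)" .
  have lim0: "((ereal \<circ> g \<circ> real_of_ereal) \<longlongrightarrow> 0) (at_right 0)"
    unfolding zero_ereal_def ereal_tendsto_simps g_def using a c by real_asymp
  have lim_inf: "((ereal \<circ> g \<circ> real_of_ereal) \<longlongrightarrow> \<infinity>) (at_left \<infinity>)"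
    unfolding ereal_tendsto_simps g_def using a c by real_asymp
  have g_deriv: "(g has_real_derivative g' t) (at t)" if "t > 0" for t
    unfolding g_def g'_def using that a c by (auto intro!: derivative_eq_intros simp: field_simps)
  have f_cont: "isCont f (g t)" if "t > 0" for t
    unfolding f_def g_def using that a c by (auto intro!: continuous_intros)
  have g'_cont: "isCont g' t" if "t > 0" for t
    unfolding g'_def using that a c by (auto intro!: continuous_intros)
  have g'_nonneg: "g' t \<ge> 0" if "t \<ge> 0" for t
    unfolding g'_def using that a c by simp
  note substitution =
    interval_integral_substitution_nonneg[of 0 \<infinity> g g' f, OF _ _ _ _ _ _ lim0 lim_inf fg_int]
  have "set_integrable lborel (einterval 0 \<infinity>) f"
    and "(LBINT y=0..\<infinity>. f y) = Gamma z / (a * c powr z)"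
    unfolding fg_val[symmetric]
    by (rule substitution;
        use a c in \<open>auto simp: zero_ereal_def g_deriv f_cont g'_cont g'_nonneg f_def\<close>)+
  then show ?thesis
    using a c z
    by (subst nn_integral_eq_integrable)
       (auto simp: f_def set_integrable_def interval_lebesgue_integral_def set_lebesgue_integral_def
        zero_ereal_def indicator_def Gamma_real_nonneg mult_ac)
qed

interpretation lborel_product: product_sigma_finite "\<lambda>_::nat. lborel :: real measure"
  by (simp add: product_sigma_finite_def lborel.sigma_finite_measure_axioms)

lemma borel_measurable_component_lborel:
  "i \<in> I \<Longrightarrow> (\<lambda>x. x i) \<in> borel_measurable (PiM I (\<lambda>_. lborel :: real measure))"
  using measurable_component_singleton[of i I "\<lambda>_. lborel"] by simp

lemma borel_measurable_ftilde:
  "n \<ge> 1 \<Longrightarrow> ftilde a n \<in> borel_measurable (PiM {1..n} (\<lambda>_. lborel))"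
  unfolding ftilde_def
  by (intro borel_measurable_add borel_measurable_sum borel_measurable_times borel_measurable_power
      borel_measurable_component_lborel) auto

lemma ftilde_Suc_upd:
  assumes "n \<ge> 1"
  shows "ftilde a (Suc n) (x(Suc n := y)) = ftilde a n x + x n * y ^ a (Suc n)"
proof -
  have "{2..Suc n} = insert (Suc n) {2..n}"
    using assms by auto
  then show ?thesis
    using assms by (auto simp: ftilde_def intro!: sum.cong)
qed

(* Real exponents r are needed: integrating out x (Suc n) leaves a non-integral power of x n. *)
definition ftilde_integrand :: "(nat \<Rightarrow> nat) \<Rightarrow> nat \<Rightarrow> (nat \<Rightarrow> real) \<Rightarrow> (nat \<Rightarrow> real) \<Rightarrow> real" where
  "ftilde_integrand a n r x =
     indicator {x. \<forall>i\<in>{1..n}. 0 < x i} x * exp (- ftilde a n x) * (\<Prod>i\<in>{1..n}. x i powr r i)"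

lemma ftilde_integrand_nonneg: "ftilde_integrand a n r x \<ge> 0"
  by (simp add: ftilde_integrand_def prod_nonneg)

lemma borel_measurable_ftilde_integrand:
  assumes "n \<ge> 1"
  shows "(\<lambda>x. ennreal (ftilde_integrand a n r x)) \<in> borel_measurable (PiM {1..n} (\<lambda>_. lborel))"
proof -
  note [measurable] = borel_measurable_ftilde[OF assms]
  show ?thesis
    unfolding ftilde_integrand_def by measurable
qed

lemma ftilde_integrand_exponent_upd:
  assumes "n \<ge> 1" and "x n > 0"
  shows "ftilde_integrand a n (r(n := r n - z)) x = ftilde_integrand a n r x / x n powr z"
proof -
  have n: "n \<in> {1..n}"
    using assms by simp
  have "(\<Prod>i\<in>{1..n}. x i powr (r(n := r n - z)) i)
      = x n powr (r n - z) * (\<Prod>i\<in>{1..n} - {n}. x i powr r i)"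
    by (subst prod.remove[OF _ n]) (auto intro!: prod.cong)
  also have "\<dots> = (\<Prod>i\<in>{1..n}. x i powr r i) / x n powr z"
    using assms by (subst prod.remove[OF _ n]) (auto simp: powr_diff)
  finally show ?thesis
    by (simp add: ftilde_integrand_def)
qed

lemma ftilde_integrand_fun_upd_Suc:
  assumes "n \<ge> 1"
  shows "ftilde_integrand a (Suc n) r (x(Suc n := y))
       = ftilde_integrand a n r x * (indicator {0<..} y * y powr r (Suc n) * exp (- x n * y powr a (Suc n)))"
proof -
  have "{1..Suc n} = insert (Suc n) {1..n}"
    by auto
  then have "x(Suc n := y) \<in> {x. \<forall>i\<in>{1..Suc n}. 0 < x i}
      \<longleftrightarrow> x \<in> {x. \<forall>i\<in>{1..n}. 0 < x i} \<and> y > 0"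
    by auto
  moreover have "(\<Prod>i\<in>{1..Suc n}. (x(Suc n := y)) i powr r i)
      = (\<Prod>i\<in>{1..n}. x i powr r i) * y powr r (Suc n)"
    by (auto simp: prod.nat_ivl_Suc' intro!: prod.cong)
  ultimately show ?thesis
    using assms
    by (auto simp: ftilde_integrand_def ftilde_Suc_upd indicator_def powr_realpow
        exp_diff exp_minus divide_inverse)
qed

lemma nn_integral_ftilde_integrand_last:
  assumes n: "n \<ge> 1" and a: "a (Suc n) > 0" and z: "z > 0"
    and r: "r (Suc n) = real (a (Suc n)) * z - 1"
  shows "(\<integral>\<^sup>+y. ennreal (ftilde_integrand a (Suc n) r (x(Suc n := y))) \<partial>lborel)
       = ennreal (Gamma z / real (a (Suc n)) * ftilde_integrand a n (r(n := r n - z)) x)"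
proof (cases "\<forall>i\<in>{1..n}. 0 < x i")
  case True
  define a' where "a' = real (a (Suc n))"
  have a': "a' > 0"
    using a by (simp add: a'_def)
  have xn: "x n > 0"
    using True n by auto
  have "(\<integral>\<^sup>+y. ennreal (ftilde_integrand a (Suc n) r (x(Suc n := y))) \<partial>lborel)
      = (\<integral>\<^sup>+y. ennreal (ftilde_integrand a n r x)
           * ennreal (indicator {0<..} y * y powr (a' * z - 1) * exp (- x n * y powr a')) \<partial>lborel)"
    by (simp only: ftilde_integrand_fun_upd_Suc[OF n] r a'_def ennreal_mult' ftilde_integrand_nonneg)
  also have "\<dots> = ennreal (ftilde_integrand a n r x)
      * (\<integral>\<^sup>+y. ennreal (indicator {0<..} y * y powr (a' * z - 1) * exp (- x n * y powr a')) \<partial>lborel)"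
    by (rule nn_integral_cmult) measurable
  also have "\<dots> = ennreal (ftilde_integrand a n r x) * ennreal (Gamma z / (a' * x n powr z))"
    by (simp only: nn_integral_powr_exp_neg_powr[OF a' xn z])
  also have "\<dots> = ennreal (ftilde_integrand a n r x * (Gamma z / (a' * x n powr z)))"
    by (simp only: ennreal_mult'[OF ftilde_integrand_nonneg])
  also have "ftilde_integrand a n r x * (Gamma z / (a' * x n powr z))
      = Gamma z / a' * ftilde_integrand a n (r(n := r n - z)) x"
    by (simp add: ftilde_integrand_exponent_upd[of n x, OF n xn])
  finally show ?thesis
    by (simp only: a'_def)
next
  case False
  then have "ftilde_integrand a n r' x = 0" for r'
    by (auto simp: ftilde_integrand_def)
  then show ?thesis
    by (simp add: ftilde_integrand_fun_upd_Suc[OF n])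
qed

lemma nn_integral_ftilde_integrand_one:
  assumes a: "a 1 > 0" and z: "z > 0" and r: "r 1 = real (a 1) * z - 1"
  shows "(\<integral>\<^sup>+x. ennreal (ftilde_integrand a 1 r x) \<partial>PiM {1} (\<lambda>_. lborel)) = ennreal (Gamma z / real (a 1))"
proof -
  have a1: "real (a 1) > 0"
    using a by simp
  define F where
    "F y = ennreal (indicator {0<..} y * y powr (real (a 1) * z - 1) * exp (- 1 * y powr a 1))" for y
  have "ftilde_integrand a 1 r x = F (x 1)" for x
    using a1 r by (auto simp: F_def ftilde_integrand_def ftilde_def indicator_def powr_realpow)
  moreover have "F \<in> borel_measurable lborel"
    unfolding F_def by measurable
  ultimately have "(\<integral>\<^sup>+x. ennreal (ftilde_integrand a 1 r x) \<partial>PiM {1} (\<lambda>_. lborel)) = (\<integral>\<^sup>+y. F y \<partial>lborel)"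
    by (simp add: lborel_product.product_nn_integral_singleton)
  also have "\<dots> = ennreal (Gamma z / real (a 1))"
    unfolding F_def nn_integral_powr_exp_neg_powr[OF a1 zero_less_one z] by simp
  finally show ?thesis .
qed

lemma nn_integral_ftilde_integrand_Suc:
  assumes n: "n \<ge> 1" and a: "a (Suc n) > 0" and z: "z > 0"
    and r: "r (Suc n) = real (a (Suc n)) * z - 1"
  shows "(\<integral>\<^sup>+x. ennreal (ftilde_integrand a (Suc n) r x) \<partial>PiM {1..Suc n} (\<lambda>_. lborel))
       = ennreal (Gamma z / real (a (Suc n)))
         * (\<integral>\<^sup>+x. ennreal (ftilde_integrand a n (r(n := r n - z)) x) \<partial>PiM {1..n} (\<lambda>_. lborel))"
proof -
  have insert_Suc: "{1..Suc n} = insert (Suc n) {1..n}"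
    by auto
  have "(\<lambda>x. ennreal (ftilde_integrand a (Suc n) r x)) \<in> borel_measurable (PiM {1..Suc n} (\<lambda>_. lborel))"
    by (rule borel_measurable_ftilde_integrand) simp
  then have "(\<integral>\<^sup>+x. ennreal (ftilde_integrand a (Suc n) r x) \<partial>PiM {1..Suc n} (\<lambda>_. lborel))
      = (\<integral>\<^sup>+x. (\<integral>\<^sup>+y. ennreal (ftilde_integrand a (Suc n) r (x(Suc n := y))) \<partial>lborel)
          \<partial>PiM {1..n} (\<lambda>_. lborel))"
    unfolding insert_Suc by (rule lborel_product.product_nn_integral_insert[rotated 2]) auto
  also have "\<dots> = (\<integral>\<^sup>+x. ennreal (Gamma z / real (a (Suc n)))
      * ennreal (ftilde_integrand a n (r(n := r n - z)) x) \<partial>PiM {1..n} (\<lambda>_. lborel))"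
    using Gamma_real_nonneg[OF z]
    by (simp only: nn_integral_ftilde_integrand_last[of n a z r, OF n a z r] ennreal_mult'
        of_nat_0_le_iff divide_nonneg_nonneg)
  also have "\<dots> = ennreal (Gamma z / real (a (Suc n)))
      * (\<integral>\<^sup>+x. ennreal (ftilde_integrand a n (r(n := r n - z)) x) \<partial>PiM {1..n} (\<lambda>_. lborel))"
    by (rule nn_integral_cmult[OF borel_measurable_ftilde_integrand[OF n]])
  finally show ?thesis .
qed

lemma nn_integral_ftilde_integrand:
  assumes "n \<ge> 1"
    and "\<And>i. i \<in> {1..n} \<Longrightarrow> a i > 0"
    and "\<And>l. l \<in> {1..n} \<Longrightarrow> e l > 0"
    and "e n = r n + 1"
    and "\<And>l. l \<in> {1..<n} \<Longrightarrow> e l = r l + 1 - e (Suc l) / real (a (Suc l))"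
  shows "(\<integral>\<^sup>+x. ennreal (ftilde_integrand a n r x) \<partial>PiM {1..n} (\<lambda>_. lborel))
         = ennreal (\<Prod>l\<in>{1..n}. Gamma (e l / real (a l)) / real (a l))"
  using assms
proof (induction n arbitrary: r rule: nat_induct_at_least)
  case base
  have "a 1 > 0" and "e 1 / real (a 1) > 0"
    using base.prems(1,2)[of 1] by auto
  moreover have "r 1 = real (a 1) * (e 1 / real (a 1)) - 1"
    using base.prems(3) calculation by simp
  ultimately show ?case
    using nn_integral_ftilde_integrand_one[of a "e 1 / real (a 1)" r] by simp
next
  case (Suc n)
  define z where "z = e (Suc n) / real (a (Suc n))"
  have a: "a (Suc n) > 0" and z: "z > 0"
    using Suc.prems(1,2)[of "Suc n"] by (auto simp: z_def)
  have r: "r (Suc n) = real (a (Suc n)) * z - 1"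
    using a Suc.prems(3) by (simp add: z_def)
  have IH: "(\<integral>\<^sup>+x. ennreal (ftilde_integrand a n (r(n := r n - z)) x) \<partial>PiM {1..n} (\<lambda>_. lborel))
      = ennreal (\<Prod>l\<in>{1..n}. Gamma (e l / real (a l)) / real (a l))"
  proof (rule Suc.IH)
    show "\<And>i. i \<in> {1..n} \<Longrightarrow> a i > 0" "\<And>l. l \<in> {1..n} \<Longrightarrow> e l > 0"
      using Suc.prems(1,2) by auto
    show "e n = (r(n := r n - z)) n + 1"
      using Suc.prems(4)[of n] Suc.hyps by (simp add: z_def)
    show "\<And>l. l \<in> {1..<n} \<Longrightarrow> e l = (r(n := r n - z)) l + 1 - e (Suc l) / real (a (Suc l))"
      using Suc.prems(4) by auto
  qed
  have "(\<integral>\<^sup>+x. ennreal (ftilde_integrand a (Suc n) r x) \<partial>PiM {1..Suc n} (\<lambda>_. lborel))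
      = ennreal (Gamma z / real (a (Suc n))) * ennreal (\<Prod>l\<in>{1..n}. Gamma (e l / real (a l)) / real (a l))"
    by (simp only: nn_integral_ftilde_integrand_Suc[of n a z r, OF Suc.hyps a z r] IH)
  also have "\<dots> = ennreal (\<Prod>l\<in>{1..Suc n}. Gamma (e l / real (a l)) / real (a l))"
    using z by (simp add: z_def ennreal_mult'[symmetric] Gamma_real_nonneg mult.commute)
  finally show ?case .
qed

lemma dprod_Suc: "dprod a (Suc j) = dprod a j * a (Suc j)"
  by (simp add: dprod_def prod.nat_ivl_Suc' mult.commute)

lemma dprod_pos: "(\<And>i. i \<in> {1..j} \<Longrightarrow> a i > 0) \<Longrightarrow> dprod a j > 0"
  unfolding dprod_def by (rule prod_pos) simp

lemma dprod_dvd: "i \<le> j \<Longrightarrow> dprod a i dvd dprod a j"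
  unfolding dprod_def by (rule prod_dvd_prod_subset) auto

(* The number e_l of the proof idea, in closed form. *)
definition gamma_numer :: "(nat \<Rightarrow> nat) \<Rightarrow> (nat \<Rightarrow> nat) \<Rightarrow> nat \<Rightarrow> nat \<Rightarrow> real" where
  "gamma_numer a k n l =
     (\<Sum>j\<in>{l..n}. (-1) ^ (l + j) * (real (k j) + 1) * real (dprod a l) / real (dprod a j))"

lemma gamma_numer_last: "dprod a n \<noteq> 0 \<Longrightarrow> gamma_numer a k n n = real (k n) + 1"
  by (simp add: gamma_numer_def)

lemma gamma_numer_Suc:
  assumes "l < n" and a_pos: "\<And>i. i \<in> {1..n} \<Longrightarrow> a i > 0"
  shows "gamma_numer a k n l = real (k l) + 1 - gamma_numer a k n (Suc l) / real (a (Suc l))"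
proof -
  have "dprod a l > 0" and a: "a (Suc l) > 0"
    using assms by (auto intro!: dprod_pos)
  have "{l..n} = insert l {Suc l..n}"
    using assms by auto
  then have "gamma_numer a k n l = real (k l) + 1
      + (\<Sum>j\<in>{Suc l..n}. (-1) ^ (l + j) * (real (k j) + 1) * real (dprod a l) / real (dprod a j))"
    using \<open>dprod a l > 0\<close> by (simp add: gamma_numer_def)
  also have "(\<Sum>j\<in>{Suc l..n}. (-1) ^ (l + j) * (real (k j) + 1) * real (dprod a l) / real (dprod a j))
      = - gamma_numer a k n (Suc l) / real (a (Suc l))"
    unfolding gamma_numer_def sum_divide_distrib sum_negf[symmetric]
    by (rule sum.cong) (use a in \<open>simp_all add: dprod_Suc\<close>)
  finally show ?thesis
    by simp
qed

lemma gamma_numer_bounds: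
  assumes k_lt: "\<And>i. i \<in> {1..<n} \<Longrightarrow> k i < a i" and k_last: "k n + 1 < a n"
    and l: "l \<in> {1..n}"
  shows "0 < gamma_numer a k n l \<and> gamma_numer a k n l < real (a l)"
proof -
  have a_pos: "a i > 0" if "i \<in> {1..n}" for i
  proof (cases "i = n")
    case False
    with that k_lt[of i] show ?thesis
      by simp
  qed (use k_last in simp)
  show ?thesis
    using l
  proof (induction "n - l" arbitrary: l)
    case 0
    then have "l = n"
      by auto
    moreover have "dprod a n \<noteq> 0"
      using dprod_pos[of n a] a_pos by simp
    ultimately show ?case
      using k_last by (simp add: gamma_numer_last)
  next
    case (Suc d)
    then have l: "1 \<le> l" "l < n"
      by auto
    have "0 < gamma_numer a k n (Suc l) \<and> gamma_numer a k n (Suc l) < real (a (Suc l))"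
      using Suc.hyps(2) l by (intro Suc.hyps(1)) auto
    then have "0 < gamma_numer a k n (Suc l) / real (a (Suc l))"
      and "gamma_numer a k n (Suc l) / real (a (Suc l)) < 1"
      by auto
    moreover have "real (k l) + 1 \<le> real (a l)"
      using k_lt[of l] l by simp
    ultimately show ?case
      using gamma_numer_Suc[OF l(2) a_pos] by auto
  qed
qed

lemma omega_arg_add_gamma_numer_in_Ints:
  assumes l: "l \<in> {1..n}" and a_pos: "\<And>i. i \<in> {1..n} \<Longrightarrow> a i > 0"
  shows "(-1) ^ (l - 1) * real (dprod a (l - 1)) / real (dprod a n)
           * real_of_int (int (dprod a n) - psi a n k) + gamma_numer a k n l / real (a l) \<in> \<int>"
proof -
  define D where "D j = real (dprod a j)" for j
  have D_pos: "D j > 0" if "j \<le> n" for j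
    using that a_pos by (auto simp: D_def intro!: dprod_pos)
  have D_div: "real (dprod a j div dprod a i) = D j / D i" if "i \<le> j" for i j
    using dprod_dvd[OF that] by (simp add: D_def real_of_nat_div)
  have sign: "(-1::real) ^ (l - 1) * (-1) ^ (j - 1) = (-1) ^ (l + j)" if "j \<ge> 1" for j
    using l that by (cases l; cases j) (auto simp: power_add)
  have psi: "real_of_int (psi a n k) = (\<Sum>j\<in>{1..n}. (-1) ^ (j - 1) * (D n / D j) * (real (k j) + 1))"
    unfolding psi_def by (simp add: D_div)
  define c where "c j = (-1) ^ (l + j) * (real (k j) + 1) * (D (l - 1) / D j)" for j
  have "(-1) ^ (l - 1) * D (l - 1) / D n * real_of_int (int (dprod a n) - psi a n k)
      = (-1) ^ (l - 1) * D (l - 1) - (\<Sum>j\<in>{1..n}. (-1) ^ (l - 1) * D (l - 1) / D n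
          * ((-1) ^ (j - 1) * (D n / D j) * (real (k j) + 1)))"
    using D_pos[of n] by (simp add: psi D_def[symmetric] right_diff_distrib sum_distrib_left)
  also have "(\<Sum>j\<in>{1..n}. (-1) ^ (l - 1) * D (l - 1) / D n
      * ((-1) ^ (j - 1) * (D n / D j) * (real (k j) + 1))) = (\<Sum>j\<in>{1..<l} \<union> {l..n}. c j)"
    using D_pos[of n] l by (intro sum.cong) (auto simp: c_def sign[symmetric])
  also have "\<dots> = (\<Sum>j\<in>{1..<l}. c j) + (\<Sum>j\<in>{l..n}. c j)"
    by (rule sum.union_disjoint) auto
  also have "(\<Sum>j\<in>{l..n}. c j) = gamma_numer a k n l / real (a l)"
  proof -
    have "D l = D (l - 1) * real (a l)"
      using l by (cases l) (auto simp: D_def dprod_Suc)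
    then show ?thesis
      using a_pos[OF l] unfolding gamma_numer_def sum_divide_distrib c_def D_def
      by (intro sum.cong) auto
  qed
  finally have "(-1) ^ (l - 1) * D (l - 1) / D n * real_of_int (int (dprod a n) - psi a n k)
      + gamma_numer a k n l / real (a l) = (-1) ^ (l - 1) * D (l - 1) - (\<Sum>j\<in>{1..<l}. c j)"
    by simp
  moreover have "c j \<in> \<int>" if "j < l" for j
    using that D_div[of j "l - 1"] by (simp add: c_def flip: D_div)
  ultimately show ?thesis
    unfolding D_def by (auto intro!: Ints_diff Ints_mult Ints_sum Ints_power)
qed

lemma one_minus_omega_eq:
  assumes l: "l \<in> {1..n}" and a_pos: "\<And>i. i \<in> {1..n} \<Longrightarrow> a i > 0"
    and e_bounds: "0 < gamma_numer a k n l" "gamma_numer a k n l < real (a l)"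
  shows "1 - omega a n (int (dprod a n) - psi a n k) l = gamma_numer a k n l / real (a l)"
proof -
  define t where "t = (-1) ^ (l - 1) * real (dprod a (l - 1)) / real (dprod a n)
    * real_of_int (int (dprod a n) - psi a n k)"
  obtain M where M: "t + gamma_numer a k n l / real (a l) = of_int M"
    using omega_arg_add_gamma_numer_in_Ints[where a = a and k = k, OF l a_pos]
    unfolding t_def[symmetric] by (auto elim: Ints_cases)
  have "\<lfloor>t\<rfloor> = M - 1"
    using e_bounds a_pos[OF l] M by (intro floor_unique) (auto simp: eq_diff_eq[symmetric])
  moreover have "omega a n (int (dprod a n) - psi a n k) l = t - \<lfloor>t\<rfloor>"
    by (simp add: omega_def t_def Let_def)
  ultimately show ?thesis
    using M by (simp add: algebra_simps)
qed

lemma nn_integral_ftilde_integrand_gamma_numer: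
  assumes "n \<ge> 1" and a_pos: "\<And>i. i \<in> {1..n} \<Longrightarrow> a i > 0"
    and e_pos: "\<And>l. l \<in> {1..n} \<Longrightarrow> gamma_numer a k n l > 0"
  shows "(\<integral>\<^sup>+x. ennreal (ftilde_integrand a n (\<lambda>i. real (k i)) x) \<partial>PiM {1..n} (\<lambda>_. lborel))
         = ennreal (\<Prod>l\<in>{1..n}. Gamma (gamma_numer a k n l / real (a l)) / real (a l))"
proof (rule nn_integral_ftilde_integrand)
  show "gamma_numer a k n n = real (k n) + 1"
    using a_pos by (intro gamma_numer_last dprod_pos[THEN less_imp_neq, symmetric]) auto
  show "gamma_numer a k n l = real (k l) + 1 - gamma_numer a k n (Suc l) / real (a (Suc l))"
    if "l \<in> {1..<n}" for l
    using that a_pos by (intro gamma_numer_Suc) auto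
qed (use assms in auto)

lemma prod_Gamma_gamma_numer:
  assumes a_pos: "\<And>i. i \<in> {1..n} \<Longrightarrow> a i > 0"
    and e_bounds: "\<And>l. l \<in> {1..n} \<Longrightarrow> 0 < gamma_numer a k n l \<and> gamma_numer a k n l < real (a l)"
  shows "(\<Prod>l\<in>{1..n}. Gamma (gamma_numer a k n l / real (a l)) / real (a l))
         = 1 / real (dprod a n) * (\<Prod>l\<in>{1..n}. Gamma (1 - omega a n (int (dprod a n) - psi a n k) l))"
proof -
  have "gamma_numer a k n l / real (a l) = 1 - omega a n (int (dprod a n) - psi a n k) l"
    if "l \<in> {1..n}" for l
    using one_minus_omega_eq[OF that a_pos] e_bounds[OF that] by simp
  then have "(\<Prod>l\<in>{1..n}. Gamma (gamma_numer a k n l / real (a l)))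
      = (\<Prod>l\<in>{1..n}. Gamma (1 - omega a n (int (dprod a n) - psi a n k) l))"
    by simp
  moreover have "(\<Prod>l\<in>{1..n}. real (a l)) = real (dprod a n)"
    by (simp add: dprod_def)
  ultimately show ?thesis
    by (simp add: prod_dividef)
qed

lemma AE_PiM_lborel_nonzero:
  fixes I :: "nat set"
  assumes "finite I"
  shows "AE x in PiM I (\<lambda>_. lborel). \<forall>i\<in>I. x i \<noteq> (0::real)"
proof (rule AE_finite_allI[OF assms])
  fix i
  assume i: "i \<in> I"
  let ?N = "PiE I (\<lambda>j. if j = i then {0::real} else UNIV)"
  have "emeasure (PiM I (\<lambda>_. lborel)) ?N = (\<Prod>j\<in>I. emeasure lborel (if j = i then {0::real} else UNIV))"
    by (rule lborel_product.emeasure_PiM) (auto simp: assms)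
  also have "\<dots> = 0"
    using i assms by (intro prod_zero) auto
  finally have "?N \<in> null_sets (PiM I (\<lambda>_. lborel))"
    using assms by (intro null_setsI) (auto intro!: sets_PiM_I_finite)
  then show "AE x in PiM I (\<lambda>_. lborel). x i \<noteq> (0::real)"
    by (rule AE_I') (use i in \<open>auto simp: space_PiM PiE_iff extensional_def\<close>)
qed

lemma ftilde_integrand_of_nat:
  assumes "\<forall>i\<in>{1..n}. x i \<noteq> 0"
  shows "indicator {x. \<forall>i\<in>{1..n}. x i \<ge> 0} x * exp (- ftilde a n x) * (\<Prod>i\<in>{1..n}. x i ^ k i)
       = ftilde_integrand a n (\<lambda>i. real (k i)) x"
proof (cases "\<forall>i\<in>{1..n}. x i > 0")
  case True
  then show ?thesis
    by (auto simp: ftilde_integrand_def indicator_def powr_realpow less_imp_le intro!: prod.cong)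
next
  case False
  with assms have "\<not> (\<forall>i\<in>{1..n}. x i \<ge> 0)"
    by force
  with False show ?thesis
    by (simp add: ftilde_integrand_def)
qed

(* The integrands differ only where some x i = 0 (note 0 ^ 0 = 1 but 0 powr 0 = 0), a null set. *)
lemma nn_integral_ftilde_monomial:
  "(\<integral>\<^sup>+ x. ennreal (indicator {x. \<forall>i\<in>{1..n}. x i \<ge> 0} x
        * exp (- ftilde a n x) * (\<Prod>i\<in>{1..n}. x i ^ k i)) \<partial>PiM {1..n} (\<lambda>_. lborel))
   = (\<integral>\<^sup>+x. ennreal (ftilde_integrand a n (\<lambda>i. real (k i)) x) \<partial>PiM {1..n} (\<lambda>_. lborel))"
  by (rule nn_integral_cong_AE)
     (use AE_PiM_lborel_nonzero[OF finite_atLeastAtMost[of 1 n]] in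
       \<open>eventually_elim, simp only: ftilde_integrand_of_nat\<close>)

theorem corollary2p16:
  fixes n :: nat and a k :: "nat \<Rightarrow> nat"
  assumes "n \<ge> 1"
    and "\<And>i. i \<in> {1..n} \<Longrightarrow> a i \<ge> 2"
    and "\<And>i. i \<in> {1..n-1} \<Longrightarrow> k i \<le> a i - 1"
    and "k n \<le> a n - 2"
  shows "(\<integral>\<^sup>+ x. ennreal (indicator {x. \<forall>i\<in>{1..n}. x i \<ge> 0} x
              * exp (- ftilde a n x) * (\<Prod>i\<in>{1..n}. x i ^ k i))
            \<partial>(PiM {1..n} (\<lambda>_. lborel)))
         = ennreal (1 / real (dprod a n) *
             (\<Prod>l\<in>{1..n}. Gamma (1 - omega a n (int (dprod a n) - psi a n k) l)))"
proof -
  have a_pos: "a i > 0" if "i \<in> {1..n}" for i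
    using assms(2)[OF that] by simp
  have k_lt: "k i < a i" if "i \<in> {1..<n}" for i
    using assms(2,3) that by force
  have k_last: "k n + 1 < a n"
    using assms(1,2,4) by force
  have e_bounds: "0 < gamma_numer a k n l \<and> gamma_numer a k n l < real (a l)" if "l \<in> {1..n}" for l
    using k_lt k_last that by (rule gamma_numer_bounds)
  have "(\<integral>\<^sup>+ x. ennreal (indicator {x. \<forall>i\<in>{1..n}. x i \<ge> 0} x
              * exp (- ftilde a n x) * (\<Prod>i\<in>{1..n}. x i ^ k i)) \<partial>(PiM {1..n} (\<lambda>_. lborel)))
      = (\<integral>\<^sup>+x. ennreal (ftilde_integrand a n (\<lambda>i. real (k i)) x) \<partial>PiM {1..n} (\<lambda>_. lborel))"
    by (rule nn_integral_ftilde_monomial)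
  also have "\<dots> = ennreal (\<Prod>l\<in>{1..n}. Gamma (gamma_numer a k n l / real (a l)) / real (a l))"
    by (rule nn_integral_ftilde_integrand_gamma_numer) (use assms(1) a_pos e_bounds in auto)
  also have "\<dots> = ennreal (1 / real (dprod a n) *
             (\<Prod>l\<in>{1..n}. Gamma (1 - omega a n (int (dprod a n) - psi a n k) l)))"
    using a_pos e_bounds by (simp only: prod_Gamma_gamma_numer)
  finally show ?thesis .
qed

end
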